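(* For any $1\leq i<j\leq n$ and any subspace $L$ of $\bigwedge^{k}V$, we have $N_{j\to i}N_{j\to i}N_{j\to i}L=N_{j\to i}N_{j\to i}L$. Moreover, if $L$ is monomial with respect to $e_j$, i.e. $L=\big(L\cap\bigwedge^{k}V^{(j)}\big)\oplus\big(L\cap(e_{j}\wedge\bigwedge^{k-1}V^{(j)})\big)$, then $N_{j\to i}N_{j\to i}L=N_{j\to i}L$.
   Context: $\mathbb{F}$ is a field (assumed throughout the paper, for expository purposes, to have characteristic not $2$), $V$ is an $n$-dimensional $\mathbb{F}$-vector space with a fixed basis $e_1,\dots,e_n$, and $\bigwedge V$ its exterior algebra. For $j\in[n]$, $V^{(j)}$ is the span of $\{e_h:h\neq j\}$, and $\bigwedge V^{(j)}$ is viewed as a subalgebra of $\bigwedge V$. Slow shift: for distinct $i,j\in[n]$ and nonzero $m\in\bigwedge^kV$, write uniquely $m=x+e_j\wedge y$ with $x\in\bigwedge^kV^{(j)}$, $y\in\bigwedge^{k-1}V^{(j)}$, and set $N_{j\to i}m=x+e_i\wedge y$ if this is nonzero, and $N_{j\to i}m=e_j\wedge y$ otherwise (the limit as $t\to0$ of the projective action of the linear map $e_j\mapsto e_i+te_j$ fixing the other $e_h$). For a subspace $L$ of $\bigwedge^kV$, $N_{j\to i}L$ is the span of $\{N_{j\to i}m:m\in L\setminus\{0\}\}$; it has the same dimension as $L$. *)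

theory Defs
  imports Complex_Main "HOL-Library.Function_Algebras"
begin

text \<open>Elements of the exterior algebra of V = F^n with basis e_1..e_n are represented by
  their coefficient functions on the standard basis e_S (S a finite subset of {1..n},
  e_S = e_{s_1} \<and> ... \<and> e_{s_r} with s_1 < ... < s_r).\<close>

type_synonym 'a ext = "nat set \<Rightarrow> 'a"

definition ext_scale :: "'a::field \<Rightarrow> 'a ext \<Rightarrow> 'a ext" where
  "ext_scale c m = (\<lambda>S. c * m S)"

definition ext_span :: "('a::field) ext set \<Rightarrow> 'a ext set" where
  "ext_span X = module.span ext_scale X"

definition ext_subspace :: "('a::field) ext set \<Rightarrow> bool" where
  "ext_subspace L = module.subspace ext_scale L"

text \<open>The k-th exterior power of V, and of V^(j) = span {e_h : h \<noteq> j}.\<close>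
definition ext_pow :: "nat \<Rightarrow> nat \<Rightarrow> ('a::field) ext set" where
  "ext_pow n k = {m. \<forall>S. m S \<noteq> 0 \<longrightarrow> S \<subseteq> {1..n} \<and> card S = k}"

definition ext_pow_omit :: "nat \<Rightarrow> nat \<Rightarrow> nat \<Rightarrow> ('a::field) ext set" where
  "ext_pow_omit n j k = {m \<in> ext_pow n k. \<forall>S. j \<in> S \<longrightarrow> m S = 0}"

text \<open>Left multiplication by e_h: e_h \<and> e_T = (-1)^{#{t \<in> T. t < h}} e_{T \<union> {h}} if h \<notin> T,
  and 0 if h \<in> T.\<close>
definition wsign :: "nat \<Rightarrow> nat set \<Rightarrow> 'a::field" where
  "wsign h T = (if even (card {t \<in> T. t < h}) then 1 else -1)"

definition wedge_e :: "nat \<Rightarrow> ('a::field) ext \<Rightarrow> 'a ext" where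
  "wedge_e h y = (\<lambda>S. if h \<in> S then wsign h (S - {h}) * y (S - {h}) else 0)"

text \<open>The unique decomposition m = x + e_j \<and> y with x, y in the exterior algebra of V^(j).\<close>
definition dec_x :: "nat \<Rightarrow> ('a::field) ext \<Rightarrow> 'a ext" where
  "dec_x j m = (\<lambda>S. if j \<in> S then 0 else m S)"

definition dec_y :: "nat \<Rightarrow> ('a::field) ext \<Rightarrow> 'a ext" where
  "dec_y j m = (\<lambda>T. if j \<in> T then 0 else wsign j T * m (insert j T))"

lemma dec_correct: "m = dec_x j m + wedge_e j (dec_y j m)"
  by (rule ext) (auto simp: dec_x_def dec_y_def wedge_e_def wsign_def insert_absorb)

definition slow_shift :: "nat \<Rightarrow> nat \<Rightarrow> ('a::field) ext \<Rightarrow> 'a ext" where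
  "slow_shift j i m =
     (let v = dec_x j m + wedge_e i (dec_y j m)
      in if v \<noteq> 0 then v else wedge_e j (dec_y j m))"

definition slow_shift_sub :: "nat \<Rightarrow> nat \<Rightarrow> ('a::field) ext set \<Rightarrow> 'a ext set" where
  "slow_shift_sub j i L = ext_span {slow_shift j i m | m. m \<in> L \<and> m \<noteq> 0}"

definition monomial_wrt :: "nat \<Rightarrow> nat \<Rightarrow> nat \<Rightarrow> ('a::field) ext set \<Rightarrow> bool" where
  "monomial_wrt n k j L =
     (L = {a + b | a b. a \<in> L \<inter> ext_pow_omit n j k \<and>
                        b \<in> L \<inter> wedge_e j ` ext_pow_omit n j (k - 1)})"

end

theory Submission
  imports Defs
begin

text \<open>Let \<open>\<pi>\<close> be the linear map \<open>x + e\<^sub>j \<and> y \<mapsto> x + e\<^sub>i \<and> y\<close>. Then \<open>N\<^sub>j\<^sub>\<rightarrow>\<^sub>i m\<close> is \<open>\<pi> m\<close>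
  unless \<open>m\<close> lies in the kernel of \<open>\<pi>\<close>, so for every subspace \<open>M\<close>
  \<open>N\<^sub>j\<^sub>\<rightarrow>\<^sub>i M = \<pi> M \<oplus> e\<^sub>j \<and> {y-parts of the elements of M \<inter> ker \<pi>}\<close>,
  which is monomial with respect to \<open>e\<^sub>j\<close>. For a monomial space \<open>A \<oplus> e\<^sub>j \<and> B\<close> this reads
  \<open>N\<^sub>j\<^sub>\<rightarrow>\<^sub>i (A \<oplus> e\<^sub>j \<and> B) = (A + e\<^sub>i \<and> B) \<oplus> e\<^sub>j \<and> {b \<in> B. e\<^sub>i \<and> b \<in> A}\<close>, and applying the
  formula once more changes nothing. So \<open>N\<^sub>j\<^sub>\<rightarrow>\<^sub>i\<close> is idempotent on monomial spaces, and
  \<open>N\<^sub>j\<^sub>\<rightarrow>\<^sub>i\<^sup>3 = N\<^sub>j\<^sub>\<rightarrow>\<^sub>i\<^sup>2\<close> because \<open>N\<^sub>j\<^sub>\<rightarrow>\<^sub>i L\<close> is monomial.\<close>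

interpretation ext_module: module "ext_scale :: 'a::field \<Rightarrow> 'a ext \<Rightarrow> 'a ext"
  by unfold_locales (auto simp: ext_scale_def algebra_simps)

interpretation dec_x: module_hom "ext_scale :: 'a::field \<Rightarrow> _" ext_scale "dec_x j" for j
  by unfold_locales (auto simp: dec_x_def ext_scale_def)

interpretation dec_y: module_hom "ext_scale :: 'a::field \<Rightarrow> _" ext_scale "dec_y j" for j
  by unfold_locales (auto simp: dec_y_def ext_scale_def algebra_simps)

interpretation wedge_e: module_hom "ext_scale :: 'a::field \<Rightarrow> _" ext_scale "wedge_e h" for h
  by unfold_locales (auto simp: wedge_e_def ext_scale_def algebra_simps)

definition shift_map :: "nat \<Rightarrow> nat \<Rightarrow> ('a::field) ext \<Rightarrow> 'a ext" where
  "shift_map j i m = dec_x j m + wedge_e i (dec_y j m)"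

interpretation shift_map: module_hom "ext_scale :: 'a::field \<Rightarrow> _" ext_scale "shift_map j i" for j i
  by unfold_locales
    (simp_all add: shift_map_def dec_x.add dec_y.add wedge_e.add dec_x.scale dec_y.scale
      wedge_e.scale algebra_simps)

lemma slow_shift_eq:
  "slow_shift j i m = (if shift_map j i m \<noteq> 0 then shift_map j i m else wedge_e j (dec_y j m))"
  by (simp add: slow_shift_def shift_map_def Let_def)

text \<open>The exterior algebra of V^(j), without the grading of \<^const>\<open>ext_pow_omit\<close>.\<close>

definition ext_omit :: "nat \<Rightarrow> ('a::field) ext set" where
  "ext_omit j = {m. \<forall>S. j \<in> S \<longrightarrow> m S = 0}"

definition wedge_sum :: "nat \<Rightarrow> ('a::field) ext set \<Rightarrow> 'a ext set \<Rightarrow> 'a ext set" where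
  "wedge_sum h A B = (\<lambda>(a, b). a + wedge_e h b) ` (A \<times> B)"

lemma wedge_sumI: "a \<in> A \<Longrightarrow> b \<in> B \<Longrightarrow> a + wedge_e h b \<in> wedge_sum h A B"
  unfolding wedge_sum_def by force

lemma wedge_sumE:
  assumes "x \<in> wedge_sum h A B"
  obtains a b where "a \<in> A" "b \<in> B" "x = a + wedge_e h b"
  using assms unfolding wedge_sum_def by auto

lemma subspace_ext_omit: "ext_module.subspace (ext_omit j)"
  by (auto simp: ext_module.subspace_def ext_omit_def ext_scale_def)

lemma dec_x_in_ext_omit: "dec_x j m \<in> ext_omit j"
  by (simp add: dec_x_def ext_omit_def)

lemma dec_y_in_ext_omit: "dec_y j m \<in> ext_omit j"
  by (simp add: dec_y_def ext_omit_def)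

lemma wedge_e_in_ext_omit: "h \<noteq> j \<Longrightarrow> b \<in> ext_omit j \<Longrightarrow> wedge_e h b \<in> ext_omit j"
  by (auto simp: wedge_e_def ext_omit_def)

lemma shift_map_in_ext_omit: "i \<noteq> j \<Longrightarrow> shift_map j i m \<in> ext_omit j"
  unfolding shift_map_def
  by (intro ext_module.subspace_add[OF subspace_ext_omit] dec_x_in_ext_omit
      wedge_e_in_ext_omit dec_y_in_ext_omit)

lemma
  assumes "a \<in> ext_omit j" "b \<in> ext_omit j"
  shows dec_x_wedge_sum: "dec_x j (a + wedge_e j b) = a"
    and dec_y_wedge_sum: "dec_y j (a + wedge_e j b) = b"
  using assms
  by (auto simp: dec_x_def dec_y_def wedge_e_def ext_omit_def wsign_def fun_eq_iff)

lemma shift_map_wedge_sum: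
  "a \<in> ext_omit j \<Longrightarrow> b \<in> ext_omit j \<Longrightarrow> shift_map j i (a + wedge_e j b) = a + wedge_e i b"
  by (simp add: shift_map_def dec_x_wedge_sum dec_y_wedge_sum)

lemma subspace_wedge_sum:
  assumes "ext_module.subspace A" "ext_module.subspace B"
  shows "ext_module.subspace (wedge_sum h A B)"
proof (rule ext_module.subspaceI)
  show "0 \<in> wedge_sum h A B"
    using wedge_sumI[of 0 A 0 B h] assms by (simp add: ext_module.subspace_0)
next
  fix x y assume "x \<in> wedge_sum h A B" "y \<in> wedge_sum h A B"
  then obtain a b a' b' where "a \<in> A" "b \<in> B" "a' \<in> A" "b' \<in> B"
    and "x + y = (a + a') + wedge_e h (b + b')"
    by (elim wedge_sumE) (simp add: wedge_e.add algebra_simps)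
  then show "x + y \<in> wedge_sum h A B"
    using assms by (simp add: wedge_sumI ext_module.subspace_add)
next
  fix c x assume "x \<in> wedge_sum h A B"
  then obtain a b where "a \<in> A" "b \<in> B"
    and "ext_scale c x = ext_scale c a + wedge_e h (ext_scale c b)"
    by (elim wedge_sumE) (simp add: wedge_e.scale ext_module.scale_right_distrib)
  then show "ext_scale c x \<in> wedge_sum h A B"
    using assms by (simp add: wedge_sumI ext_module.subspace_scale)
qed

lemma shift_map_in_slow_shift_sub:
  assumes "m \<in> M"
  shows "shift_map j i m \<in> slow_shift_sub j i M"
proof (cases "shift_map j i m = 0")
  case False
  then have "m \<noteq> 0" and "slow_shift j i m = shift_map j i m"
    by (auto simp: slow_shift_eq)
  then show ?thesis
    using \<open>m \<in> M\<close> unfolding slow_shift_sub_def ext_span_def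
    by (intro ext_module.span_base CollectI exI[of _ m]) simp
qed (simp add: slow_shift_sub_def ext_span_def ext_module.span_zero)

lemma wedge_dec_y_in_slow_shift_sub:
  assumes "m \<in> M" "shift_map j i m = 0"
  shows "wedge_e j (dec_y j m) \<in> slow_shift_sub j i M"
proof (cases "m = 0")
  case False
  have "slow_shift j i m = wedge_e j (dec_y j m)"
    using assms(2) by (simp add: slow_shift_eq)
  then show ?thesis
    using \<open>m \<in> M\<close> False unfolding slow_shift_sub_def ext_span_def
    by (intro ext_module.span_base CollectI exI[of _ m]) simp
qed (simp add: slow_shift_sub_def ext_span_def ext_module.span_zero)

lemma subspace_dec_y_kernel:
  "ext_module.subspace M \<Longrightarrow>
    ext_module.subspace (dec_y j ` (M \<inter> {m. shift_map j i m = 0}))"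
  by (intro dec_y.subspace_image ext_module.subspace_inter shift_map.subspace_kernel)

lemma slow_shift_sub_eq:
  assumes M: "ext_module.subspace M"
  shows "slow_shift_sub j i M =
    wedge_sum j (shift_map j i ` M) (dec_y j ` (M \<inter> {m. shift_map j i m = 0}))"
    (is "_ = wedge_sum j ?P ?Q")
proof
  have P: "ext_module.subspace ?P"
    using M by (rule shift_map.subspace_image)
  have Q: "ext_module.subspace ?Q"
    using M by (rule subspace_dec_y_kernel)
  have "slow_shift j i m \<in> wedge_sum j ?P ?Q" if "m \<in> M" for m
  proof (cases "shift_map j i m = 0")
    case True
    then show ?thesis
      using wedge_sumI[OF ext_module.subspace_0[OF P], of "dec_y j m" ?Q j] \<open>m \<in> M\<close>
      by (simp add: slow_shift_eq)
  next
    case False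
    then show ?thesis
      using wedge_sumI[OF _ ext_module.subspace_0[OF Q], of "shift_map j i m" ?P j] \<open>m \<in> M\<close>
      by (simp add: slow_shift_eq)
  qed
  then show "slow_shift_sub j i M \<subseteq> wedge_sum j ?P ?Q"
    unfolding slow_shift_sub_def ext_span_def
    by (intro ext_module.span_minimal subspace_wedge_sum P Q) blast
  have "ext_module.subspace (slow_shift_sub j i M)"
    by (simp add: slow_shift_sub_def ext_span_def ext_module.subspace_span)
  then show "wedge_sum j ?P ?Q \<subseteq> slow_shift_sub j i M"
    by (auto elim!: wedge_sumE intro!: ext_module.subspace_add
        shift_map_in_slow_shift_sub wedge_dec_y_in_slow_shift_sub)
qed

lemma slow_shift_sub_wedge_sum:
  assumes A: "ext_module.subspace A" "A \<subseteq> ext_omit j"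
    and B: "ext_module.subspace B" "B \<subseteq> ext_omit j"
  shows "slow_shift_sub j i (wedge_sum j A B) =
    wedge_sum j (wedge_sum i A B) (B \<inter> wedge_e i -` A)"
proof -
  have "shift_map j i ` wedge_sum j A B = wedge_sum i A B"
    unfolding wedge_sum_def image_image
    using A(2) B(2) by (intro image_cong) (auto intro!: shift_map_wedge_sum)
  moreover have "dec_y j ` (wedge_sum j A B \<inter> {m. shift_map j i m = 0}) = B \<inter> wedge_e i -` A"
  proof (intro equalityI subsetI)
    fix x assume "x \<in> dec_y j ` (wedge_sum j A B \<inter> {m. shift_map j i m = 0})"
    then obtain a b where ab: "a \<in> A" "b \<in> B" "x = dec_y j (a + wedge_e j b)"
      and "shift_map j i (a + wedge_e j b) = 0"
      by (auto elim!: wedge_sumE)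
    then have "a + wedge_e i b = 0"
      using A(2) B(2) by (simp add: shift_map_wedge_sum subsetD)
    then have "wedge_e i b = - a"
      by (simp add: add_eq_0_iff)
    moreover have "x = b"
      using ab A(2) B(2) by (simp add: dec_y_wedge_sum subsetD)
    ultimately show "x \<in> B \<inter> wedge_e i -` A"
      using ab A(1) by (simp add: ext_module.subspace_neg)
  next
    fix b assume b: "b \<in> B \<inter> wedge_e i -` A"
    define a where "a = - wedge_e i b"
    have "a \<in> A"
      using b A(1) by (simp add: a_def ext_module.subspace_neg)
    moreover have "a \<in> ext_omit j" "b \<in> ext_omit j"
      using \<open>a \<in> A\<close> b A(2) B(2) by auto
    then have "shift_map j i (a + wedge_e j b) = 0" "b = dec_y j (a + wedge_e j b)"
      by (simp_all add: shift_map_wedge_sum dec_y_wedge_sum, simp add: a_def)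
    ultimately have "a + wedge_e j b \<in> wedge_sum j A B \<inter> {m. shift_map j i m = 0}"
      and "b = dec_y j (a + wedge_e j b)"
      using b by (simp_all add: wedge_sumI)
    then show "b \<in> dec_y j ` (wedge_sum j A B \<inter> {m. shift_map j i m = 0})"
      by blast
  qed
  ultimately show ?thesis
    by (simp add: slow_shift_sub_eq subspace_wedge_sum A(1) B(1))
qed

lemma subset_wedge_sum: "0 \<in> B \<Longrightarrow> A \<subseteq> wedge_sum h A B"
  using wedge_sumI[of _ A 0 B h] by auto

lemma wedge_sum_absorb:
  assumes A: "ext_module.subspace A" and C: "0 \<in> C" "wedge_e h ` C \<subseteq> A"
  shows "wedge_sum h (wedge_sum h A B) C = wedge_sum h A B"
proof
  show "wedge_sum h (wedge_sum h A B) C \<subseteq> wedge_sum h A B"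
  proof
    fix x assume "x \<in> wedge_sum h (wedge_sum h A B) C"
    then obtain a b c where "a \<in> A" "b \<in> B" "c \<in> C"
      and "x = (a + wedge_e h c) + wedge_e h b"
      by (elim wedge_sumE) (simp add: algebra_simps)
    then show "x \<in> wedge_sum h A B"
      using A C(2) by (auto intro!: wedge_sumI ext_module.subspace_add)
  qed
qed (rule subset_wedge_sum[OF C(1)])

definition monomial_space :: "nat \<Rightarrow> ('a::field) ext set \<Rightarrow> bool" where
  "monomial_space j M \<longleftrightarrow> (\<exists>A B. ext_module.subspace A \<and> A \<subseteq> ext_omit j \<and>
     ext_module.subspace B \<and> B \<subseteq> ext_omit j \<and> M = wedge_sum j A B)"

lemma monomial_space_slow_shift_sub:
  assumes "i \<noteq> j" and M: "ext_module.subspace M"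
  shows "monomial_space j (slow_shift_sub j i M)"
  unfolding monomial_space_def slow_shift_sub_eq[OF M]
proof (intro exI conjI)
  show "ext_module.subspace (shift_map j i ` M)"
    using M by (rule shift_map.subspace_image)
  show "ext_module.subspace (dec_y j ` (M \<inter> {m. shift_map j i m = 0}))"
    using M by (rule subspace_dec_y_kernel)
qed (use \<open>i \<noteq> j\<close> shift_map_in_ext_omit dec_y_in_ext_omit in auto)

lemma monomial_wrt_imp_monomial_space:
  assumes L: "ext_module.subspace L" and "monomial_wrt n k j L"
  shows "monomial_space j L"
  unfolding monomial_space_def
proof (intro exI conjI)
  show "L = wedge_sum j (L \<inter> ext_omit j) (ext_omit j \<inter> wedge_e j -` L)"
  proof
    show "L \<subseteq> wedge_sum j (L \<inter> ext_omit j) (ext_omit j \<inter> wedge_e j -` L)"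
    proof
      fix x assume "x \<in> L"
      then obtain a b where "a \<in> L \<inter> ext_pow_omit n j k" "b \<in> ext_pow_omit n j (k - 1)"
        and "wedge_e j b \<in> L" "x = a + wedge_e j b"
        using \<open>monomial_wrt n k j L\<close> unfolding monomial_wrt_def by blast
      then show "x \<in> wedge_sum j (L \<inter> ext_omit j) (ext_omit j \<inter> wedge_e j -` L)"
        by (auto simp: ext_pow_omit_def ext_omit_def intro!: wedge_sumI)
    qed
    show "wedge_sum j (L \<inter> ext_omit j) (ext_omit j \<inter> wedge_e j -` L) \<subseteq> L"
      using L by (auto elim!: wedge_sumE intro: ext_module.subspace_add)
  qed
qed (auto intro: ext_module.subspace_inter L subspace_ext_omit wedge_e.subspace_vimage)

lemma slow_shift_sub_idem:
  assumes "i \<noteq> j" and "monomial_space j M"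
  shows "slow_shift_sub j i (slow_shift_sub j i M) = slow_shift_sub j i M"
proof -
  obtain A B where A: "ext_module.subspace A" "A \<subseteq> ext_omit j"
    and B: "ext_module.subspace B" "B \<subseteq> ext_omit j" and M: "M = wedge_sum j A B"
    using \<open>monomial_space j M\<close> unfolding monomial_space_def by blast
  let ?A' = "wedge_sum i A B" and ?B' = "B \<inter> wedge_e i -` A"
  have A': "ext_module.subspace ?A'" "?A' \<subseteq> ext_omit j"
    using A B \<open>i \<noteq> j\<close>
    by (auto simp: subspace_wedge_sum elim!: wedge_sumE
        intro!: ext_module.subspace_add[OF subspace_ext_omit] wedge_e_in_ext_omit)
  have B': "ext_module.subspace ?B'" "?B' \<subseteq> ext_omit j"
    using A B by (auto intro: ext_module.subspace_inter wedge_e.subspace_vimage)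
  have "wedge_sum i ?A' ?B' = ?A'"
    using A B by (intro wedge_sum_absorb) (auto simp: ext_module.subspace_0 subspace_wedge_sum)
  moreover have "?B' \<inter> wedge_e i -` ?A' = ?B'"
    using subset_wedge_sum[OF ext_module.subspace_0[OF B(1)]] by auto
  ultimately show ?thesis
    unfolding M by (simp add: slow_shift_sub_wedge_sum A B A' B')
qed

theorem corollary3p7:
  fixes L :: "('a::field) ext set" and n k i j :: nat
  assumes char: "(2::'a) \<noteq> 0"
    and ij: "1 \<le> i" "i < j" "j \<le> n"
    and sub: "ext_subspace L" "L \<subseteq> ext_pow n k"
  shows "slow_shift_sub j i (slow_shift_sub j i (slow_shift_sub j i L))
           = slow_shift_sub j i (slow_shift_sub j i L)
         \<and> (monomial_wrt n k j L \<longrightarrow>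
              slow_shift_sub j i (slow_shift_sub j i L) = slow_shift_sub j i L)"
proof -
  have "i \<noteq> j" using ij by simp
  have L: "ext_module.subspace L" using sub(1) by (simp add: ext_subspace_def)
  show ?thesis
    using slow_shift_sub_idem[OF \<open>i \<noteq> j\<close> monomial_space_slow_shift_sub[OF \<open>i \<noteq> j\<close> L]]
      slow_shift_sub_idem[OF \<open>i \<noteq> j\<close> monomial_wrt_imp_monomial_space[OF L]]
    by blast
qed

end
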